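(* Let $n\ge 3$ be an integer and let $\overline D_n:=\langle a,b\mid aba=bab,\ ab^2a=b^{n-2}\rangle$. Then in $\overline D_n$ the identity $$a^n=(b^{n-4}a^{-1})^n$$ holds. *)

theory Defs
  imports "HOL-Algebra.Group"
begin

end

theory Submission
  imports Defs
begin

text \<open>
  Let \<open>\<Delta> = aba = bab\<close> be the Garside element. Conjugation by \<open>\<Delta>\<close> swaps \<open>a\<close> and \<open>b\<close>, so \<open>\<Delta>\<^sup>2\<close> is central,
  and \<open>b\<^sup>n = b (ab\<^sup>2a) b = (bab)\<^sup>2 = \<Delta>\<^sup>2\<close>; pushing \<open>a\<^sup>n\<close> past \<open>\<Delta>\<close> turns it into
  \<open>b\<^sup>n\<close>, whence \<open>a\<^sup>n = \<Delta>\<^sup>2\<close> as well. Finally \<open>b\<^sup>n\<^sup>-\<^sup>4a\<^sup>-\<^sup>1 = b\<^sup>-\<^sup>2(ab\<^sup>2a)a\<^sup>-\<^sup>1 = b\<^sup>-\<^sup>2ab\<^sup>2\<close>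
  is a conjugate of \<open>a\<close>, so its \<open>n\<close>-th power is a conjugate of the central element \<open>a\<^sup>n\<close>.
\<close>

context group
begin

lemma inv_m_cancel_left [simp]:
  "x \<in> carrier G \<Longrightarrow> y \<in> carrier G \<Longrightarrow> inv x \<otimes> (x \<otimes> y) = y"
  by (simp flip: m_assoc)

lemma nat_pow_conj:
  assumes "c \<in> carrier G" "x \<in> carrier G"
  shows "(c \<otimes> x \<otimes> inv c) [^] (k::nat) = c \<otimes> x [^] k \<otimes> inv c"
  using assms by (induction k) (simp_all add: m_assoc)

lemma nat_pow_intertwine:
  assumes "x \<in> carrier G" "y \<in> carrier G" "d \<in> carrier G" "d \<otimes> y = x \<otimes> d"
  shows "x [^] (k::nat) \<otimes> d = d \<otimes> y [^] k"
proof (induction k)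
  case 0
  then show ?case using assms by simp
next
  case (Suc k)
  have "x [^] Suc k \<otimes> d = x [^] k \<otimes> (d \<otimes> y)"
    using assms by (simp add: m_assoc)
  also have "\<dots> = (x [^] k \<otimes> d) \<otimes> y"
    using assms by (simp add: m_assoc)
  also have "\<dots> = d \<otimes> y [^] Suc k"
    using Suc assms by (simp add: m_assoc)
  finally show ?case .
qed

lemma conj_central:
  assumes "c \<in> carrier G" "z \<in> carrier G" "z \<otimes> c = c \<otimes> z"
  shows "inv c \<otimes> z \<otimes> c = z"
  using assms by (simp add: m_assoc)

lemma int_pow_diff_of_nat:
  assumes "x \<in> carrier G"
  shows "x [^] (int m - int k) = inv (x [^] k) \<otimes> x [^] m"
  using assms int_pow_mult[of x "- int k" "int m"] by (simp add: int_pow_neg int_pow_int)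

end

locale braid_pair = group +
  fixes a b
  assumes a_closed [simp]: "a \<in> carrier G"
    and b_closed [simp]: "b \<in> carrier G"
    and braid: "a \<otimes> b \<otimes> a = b \<otimes> a \<otimes> b"
begin

definition garside :: 'a
  where "garside = a \<otimes> b \<otimes> a"

lemma garside_closed [simp]: "garside \<in> carrier G"
  by (simp add: garside_def)

lemma garside_mult_b: "garside \<otimes> b = a \<otimes> garside"
proof -
  have "garside \<otimes> b = a \<otimes> (b \<otimes> a \<otimes> b)"
    by (simp add: garside_def m_assoc)
  then show ?thesis
    by (simp add: garside_def braid)
qed

lemma garside_mult_a: "garside \<otimes> a = b \<otimes> garside"
proof -
  have "b \<otimes> garside = (b \<otimes> a \<otimes> b) \<otimes> a"
    by (simp add: garside_def m_assoc)
  then show ?thesis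
    by (simp add: garside_def braid)
qed

lemma garside_square_comm_b_pow:
  "b [^] (k::nat) \<otimes> (garside \<otimes> garside) = garside \<otimes> garside \<otimes> b [^] k"
proof (rule nat_pow_intertwine)
  show "garside \<otimes> garside \<otimes> b = b \<otimes> (garside \<otimes> garside)"
    by (simp add: m_assoc garside_mult_b) (simp flip: m_assoc add: garside_mult_a)
qed simp_all

lemma b_pow_eq_garside_square:
  assumes "a \<otimes> b [^] (2::nat) \<otimes> a = b [^] m"
  shows "b [^] Suc (Suc m) = garside \<otimes> garside"
proof -
  have "b [^] Suc (Suc m) = b \<otimes> b [^] m \<otimes> b"
    using nat_pow_Suc2[of b "Suc m"] by (simp add: m_assoc)
  also have "\<dots> = b \<otimes> (a \<otimes> b [^] (2::nat) \<otimes> a) \<otimes> b"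
    by (simp add: assms)
  also have "\<dots> = (b \<otimes> a \<otimes> b) \<otimes> (b \<otimes> a \<otimes> b)"
    by (simp add: numeral_2_eq_2 m_assoc)
  finally show ?thesis
    by (simp add: garside_def braid)
qed

lemma a_pow_eq_garside_square:
  assumes "b [^] (k::nat) = garside \<otimes> garside"
  shows "a [^] k = garside \<otimes> garside"
proof -
  have "a [^] k \<otimes> garside = garside \<otimes> b [^] k"
    by (simp add: nat_pow_intertwine garside_mult_b)
  also have "\<dots> = garside \<otimes> garside \<otimes> garside"
    by (simp add: assms m_assoc)
  finally show ?thesis
    by simp
qed

end

theorem mainTheorem5:
  fixes G (structure) and n :: nat and a b
  assumes "group G" and "n \<ge> 3"
    and "a \<in> carrier G" and "b \<in> carrier G"
    and "a \<otimes> b \<otimes> a = b \<otimes> a \<otimes> b"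
    and "a \<otimes> (b [^] (2::nat)) \<otimes> a = b [^] (n - 2)"
  shows "a [^] n = (b [^] (int n - 4) \<otimes> inv a) [^] n"
proof -
  interpret braid_pair G a b
    using assms by (simp add: braid_pair_def braid_pair_axioms_def)
  define m where "m = n - 2"
  have n: "n = Suc (Suc m)" and exp: "int n - 4 = int m - int 2"
    using assms(2) by (simp_all add: m_def)
  have rel: "a \<otimes> b [^] (2::nat) \<otimes> a = b [^] m"
    using assms(6) by (simp add: m_def)
  have a_pow: "a [^] n = garside \<otimes> garside"
    unfolding n by (rule a_pow_eq_garside_square[OF b_pow_eq_garside_square[OF rel]])
  have "b [^] (int n - 4) = inv (b [^] (2::nat)) \<otimes> (a \<otimes> b [^] (2::nat) \<otimes> a)"
    unfolding exp rel by (rule int_pow_diff_of_nat) simp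
  then have "b [^] (int n - 4) \<otimes> inv a = inv (b [^] (2::nat)) \<otimes> a \<otimes> b [^] (2::nat)"
    by (simp add: m_assoc)
  then have "(b [^] (int n - 4) \<otimes> inv a) [^] n = inv (b [^] (2::nat)) \<otimes> a [^] n \<otimes> b [^] (2::nat)"
    using nat_pow_conj[of "inv (b [^] (2::nat))" a n] by simp
  also have "\<dots> = a [^] n"
    by (simp add: a_pow conj_central garside_square_comm_b_pow)
  finally show ?thesis ..
qed

end
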